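(* Let $\mathcal C$ be a concept hierarchy, $r_1,r_2,\epsilon\in[0,1]$ with $r_1\le r_2(1-\epsilon)$, $m$ a positive integer, and let $\mathcal A_1$ and $\mathcal H$ be the networks defined below (with $\mathcal H$ having a fixed failed set $F$ satisfying the stated constraint). Then $\mathcal H$ $implements_1$ $\mathcal A_1$: for every $B\subseteq C_0$, in the executions of $\mathcal A_1$ and $\mathcal H$ on input $B$, for every concept $c$, if $rep(c)$ fires at time $level(c)$ in $\mathcal A_1$, then at least $m(1-\epsilon)$ of the neurons in $reps(c)$ fire at time $level(c)$ in $\mathcal H$.
   Context: Concept hierarchies: fix positive integers $\ell_{max},n,k$. A universal set $D$ of concepts is partitioned into disjoint sets $D_0,\dots,D_{\ell_{max}}$ with $|D_0|=n$; $level(c)=\ell$ for $c\in D_\ell$. A concept hierarchy $\mathcal C$ consists of $C\subseteq D$, with $C_\ell=C\cap D_\ell$, and for each $c\in C_\ell$ with $1\le\ell\le\ell_{max}$ a set $children(c)\subseteq C_{\ell-1}$, such that $|C_{\ell_{max}}|=k$, $|children(c)|=k$ for all such $c$, and $children(c)\cap children(c')=\emptyset$ for distinct $c,c'\in C_\ell$. Common network dynamics: neurons partitioned into layers $N_0,\dots,N_{\ell_{max}}$; threshold $\tau$; weights $w(u,v)\in\{0,1\}$ for $u\in N_{\ell-1}$, $v\in N_\ell$. Failed neurons never fire. A non-failed neuron $v\in N_\ell$, $\ell\ge1$, does not fire at time 0 and fires at time $t\ge1$ iff $\sum_{u\in N_{\ell-1}}w(u,v)x_u(t-1)\ge\tau$,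 where $x_u(s)\in\{0,1\}$ indicates whether $u$ fires at time $s$. $\mathcal A_1$: no failures; each $c\in D_0$ has $rep(c)\in N_0$, each $c\in C$ with $level(c)\ge1$ has $rep(c)\in N_{level(c)}$, all distinct; $w(u,v)=1$ iff $v=rep(c)$, $u=rep(c')$ for a child $c'$ of $c$, else $0$; $\tau=r_2k$. Input $B\subseteq C_0$: the layer-0 neurons $rep(b)$, $b\in B$, fire at time 0, no other layer-0 neuron fires at time 0, and no layer-0 neuron fires at any other time. $\mathcal H$: each $c\in D_0$ has a set $reps(c)$ of $m$ neurons in $N_0$, each $c\in C$ with $level(c)\ge1$ a set $reps(c)$ of $m$ neurons in $N_{level(c)}$, all pairwise disjoint; $w(u,v)=1$ iff $v\in reps(c)$ and $u\in reps(c')$ for a child $c'$ of $c$, else $0$; $\tau=r_2km(1-\epsilon)$. A fixed set $F$ of neurons is failed, such that for every concept $c$ at least $m(1-\epsilon)$ neurons of $reps(c)$ are not in $F$. Input $B\subseteq C_0$: a layer-0 neuron fires at time 0 iff it is in $\bigcup_{b\in B}reps(b)\setminus F$, and no layer-0 neuron fires at any other time. *)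

theory Defs
  imports Complex_Main
begin

definition concept_hierarchy ::
  "'c set \<Rightarrow> ('c \<Rightarrow> nat) \<Rightarrow> nat \<Rightarrow> nat \<Rightarrow> nat \<Rightarrow> 'c set \<Rightarrow> ('c \<Rightarrow> 'c set) \<Rightarrow> bool" where
  "concept_hierarchy D level lmax n k C children \<longleftrightarrow>
     0 < lmax \<and> 0 < n \<and> 0 < k \<and>
     (\<forall>c\<in>D. level c \<le> lmax) \<and>
     finite {c\<in>D. level c = 0} \<and> card {c\<in>D. level c = 0} = n \<and>
     C \<subseteq> D \<and>
     finite {c\<in>C. level c = lmax} \<and> card {c\<in>C. level c = lmax} = k \<and>
     (\<forall>c\<in>C. 1 \<le> level c \<longrightarrow>
        children c \<subseteq> {c'\<in>C. level c' = level c - 1} \<and> finite (children c) \<and> card (children c) = k) \<and>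
     (\<forall>c\<in>C. \<forall>c'\<in>C. 1 \<le> level c \<longrightarrow> level c' = level c \<longrightarrow> c \<noteq> c' \<longrightarrow>
        children c \<inter> children c' = {})"

definition rep_domain :: "'c set \<Rightarrow> ('c \<Rightarrow> nat) \<Rightarrow> 'c set \<Rightarrow> 'c set" where
  "rep_domain D level C = {c\<in>D. level c = 0} \<union> {c\<in>C. 1 \<le> level c}"

definition layered_network :: "'n set \<Rightarrow> ('n \<Rightarrow> nat) \<Rightarrow> nat \<Rightarrow> bool" where
  "layered_network N layer lmax \<longleftrightarrow> finite N \<and> (\<forall>v\<in>N. layer v \<le> lmax)"

primrec fired :: "'n set \<Rightarrow> ('n \<Rightarrow> nat) \<Rightarrow> ('n \<Rightarrow> 'n \<Rightarrow> real) \<Rightarrow> real \<Rightarrow> 'n set \<Rightarrow> 'n set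
                  \<Rightarrow> nat \<Rightarrow> 'n set" where
  "fired N layer w tau F I0 0 = {v\<in>N. layer v = 0 \<and> v \<notin> F \<and> v \<in> I0}"
| "fired N layer w tau F I0 (Suc t) =
     {v\<in>N. v \<notin> F \<and> 1 \<le> layer v \<and>
        tau \<le> (\<Sum>u\<in>{u\<in>N. layer u + 1 = layer v}.
                  w u v * (if u \<in> fired N layer w tau F I0 t then 1 else 0))}"

definition A1_weight :: "'c set \<Rightarrow> ('c \<Rightarrow> nat) \<Rightarrow> ('c \<Rightarrow> 'c set) \<Rightarrow> ('c \<Rightarrow> 'n) \<Rightarrow> 'n \<Rightarrow> 'n \<Rightarrow> real" where
  "A1_weight C level children rep u v =
     (if \<exists>c\<in>C. 1 \<le> level c \<and> v = rep c \<and> (\<exists>c'\<in>children c. u = rep c') then 1 else 0)"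

definition H_weight :: "'c set \<Rightarrow> ('c \<Rightarrow> nat) \<Rightarrow> ('c \<Rightarrow> 'c set) \<Rightarrow> ('c \<Rightarrow> 'n set) \<Rightarrow> 'n \<Rightarrow> 'n \<Rightarrow> real" where
  "H_weight C level children reps u v =
     (if \<exists>c\<in>C. 1 \<le> level c \<and> v \<in> reps c \<and> (\<exists>c'\<in>children c. u \<in> reps c') then 1 else 0)"

end

theory Submission
  imports Defs "HOL-Library.Disjoint_Sets"
begin

(* The proof establishes a stronger invariant by induction on the level: if rep c fires in A_1,
   then every non-failed neuron of reps c fires in H.  If rep c fires at level l + 1, then at
   least r2 k of its children fired in A_1; by induction each of them has at least m (1 - eps)
   firing neurons in H, and these sets are disjoint, so every non-failed v in reps c receives
   input at least r2 k m (1 - eps), the threshold of H. *)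

lemma fired_Suc_iff_card_inputs:
  assumes "finite N" and "\<And>u. w u v = (if u \<in> P then 1 else 0)"
  shows "v \<in> fired N layer w tau F I0 (Suc t) \<longleftrightarrow>
           v \<in> N \<and> v \<notin> F \<and> 1 \<le> layer v \<and>
           tau \<le> real (card {u\<in>N. layer u + 1 = layer v \<and> u \<in> P \<and> u \<in> fired N layer w tau F I0 t})"
proof -
  let ?X = "fired N layer w tau F I0 t"
  have "(\<Sum>u\<in>{u\<in>N. layer u + 1 = layer v}. w u v * (if u \<in> ?X then 1 else 0))
        = (\<Sum>u\<in>{u\<in>N. layer u + 1 = layer v}. if u \<in> P \<and> u \<in> ?X then 1 else 0)"
    using assms(2) by (intro sum.cong) auto
  also have "\<dots> = real (card {u\<in>N. layer u + 1 = layer v \<and> u \<in> P \<and> u \<in> ?X})"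
    using assms(1) by (simp add: sum.inter_filter[symmetric] conj_assoc)
  finally show ?thesis by simp
qed

lemma A1_weight_rep:
  assumes "inj_on rep C" "c \<in> C" "1 \<le> level c"
  shows "A1_weight C level children rep u (rep c) = (if u \<in> rep ` children c then 1 else 0)"
  using assms unfolding A1_weight_def by (auto dest: inj_onD)

lemma H_weight_reps:
  assumes "disjoint_family_on reps C" "c \<in> C" "1 \<le> level c" "v \<in> reps c"
  shows "H_weight C level children reps u v = (if u \<in> (\<Union>c'\<in>children c. reps c') then 1 else 0)"
proof -
  have "c0 = c" if "c0 \<in> C" "v \<in> reps c0" for c0
    using assms(1,2,4) that by (meson disjoint_family_onD disjoint_iff)
  then have "(\<exists>c0\<in>C. 1 \<le> level c0 \<and> v \<in> reps c0 \<and> (\<exists>c'\<in>children c0. u \<in> reps c'))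
        \<longleftrightarrow> u \<in> (\<Union>c'\<in>children c. reps c')"
    using assms(2-4) by blast
  then show ?thesis unfolding H_weight_def by simp
qed

(* tau is the threshold r2 k of A_1; q = m (1 - eps) bounds the number of non-failed
   neurons per concept from below, and H has threshold tau * q. *)
locale hierarchy_networks =
  fixes C :: "'c set" and level :: "'c \<Rightarrow> nat" and children :: "'c \<Rightarrow> 'c set"
    and N1 :: "'n1 set" and layer1 :: "'n1 \<Rightarrow> nat" and rep :: "'c \<Rightarrow> 'n1"
    and N2 :: "'n2 set" and layer2 :: "'n2 \<Rightarrow> nat" and reps :: "'c \<Rightarrow> 'n2 set"
    and F :: "'n2 set" and tau q :: real
  assumes children_level: "\<And>c. c \<in> C \<Longrightarrow> 1 \<le> level c \<Longrightarrow> children c \<subseteq> {c'\<in>C. level c' = level c - 1}"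
    and finite_children: "\<And>c. c \<in> C \<Longrightarrow> 1 \<le> level c \<Longrightarrow> finite (children c)"
    and finite_N1: "finite N1" and finite_N2: "finite N2"
    and rep_inj: "inj_on rep C"
    and reps_N2: "\<And>c. c \<in> C \<Longrightarrow> reps c \<subseteq> N2"
    and reps_layer: "\<And>c v. c \<in> C \<Longrightarrow> v \<in> reps c \<Longrightarrow> layer2 v = level c"
    and finite_reps: "\<And>c. c \<in> C \<Longrightarrow> finite (reps c)"
    and reps_disjoint: "disjoint_family_on reps C"
    and card_reps_unfailed: "\<And>c. c \<in> C \<Longrightarrow> q \<le> real (card (reps c - F))"
    and q_nonneg: "0 \<le> q"
begin

abbreviation A1_fired :: "'c set \<Rightarrow> nat \<Rightarrow> 'n1 set" where
  "A1_fired B \<equiv> fired N1 layer1 (A1_weight C level children rep) tau {} (rep ` B)"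

abbreviation H_fired :: "'c set \<Rightarrow> nat \<Rightarrow> 'n2 set" where
  "H_fired B \<equiv> fired N2 layer2 (H_weight C level children reps) (tau * q) F (\<Union>b\<in>B. reps b)"

lemma A1_fired_Suc_card_children:
  assumes "c \<in> C" "level c = Suc l" "rep c \<in> A1_fired B (Suc l)"
  shows "tau \<le> real (card {c'\<in>children c. rep c' \<in> A1_fired B l})"
proof -
  let ?K = "{c'\<in>children c. rep c' \<in> A1_fired B l}"
  have fin: "finite ?K" using finite_children assms by simp
  have "A1_weight C level children rep u (rep c) = (if u \<in> rep ` children c then 1 else 0)" for u
    using A1_weight_rep[OF rep_inj] assms by simp
  then have "tau \<le> real (card {u\<in>N1. layer1 u + 1 = layer1 (rep c) \<and> u \<in> rep ` children c \<and> u \<in> A1_fired B l})"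
    using assms(3) fired_Suc_iff_card_inputs[OF finite_N1] by blast
  also have "\<dots> \<le> real (card (rep ` ?K))"
    using fin by (intro of_nat_mono card_mono) auto
  also have "\<dots> \<le> real (card ?K)"
    using card_image_le[OF fin] by simp
  finally show ?thesis .
qed

lemma H_fired_Suc_if_children_fired:
  assumes c: "c \<in> C" "level c = Suc l"
    and K: "K \<subseteq> children c" "tau \<le> real (card K)"
    and K_fired: "\<And>c'. c' \<in> K \<Longrightarrow> reps c' - F \<subseteq> H_fired B l"
  shows "reps c - F \<subseteq> H_fired B (Suc l)"
proof
  fix v assume v: "v \<in> reps c - F"
  let ?P = "\<Union>c'\<in>children c. reps c'"
  have weight: "H_weight C level children reps u v = (if u \<in> ?P then 1 else 0)" for u
    using H_weight_reps[OF reps_disjoint] c v by simp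
  have v_layer: "layer2 v = Suc l"
    using reps_layer c v by simp
  have K_level: "c' \<in> C" "level c' = l" if "c' \<in> K" for c'
    using children_level[OF c(1)] c(2) K(1) that by auto
  have fin_K: "finite K"
    using c(2) by (intro finite_subset[OF K(1) finite_children[OF c(1)]]) simp
  have "tau * q \<le> real (card K) * q"
    using K(2) q_nonneg by (rule mult_right_mono)
  also have "\<dots> = (\<Sum>c'\<in>K. q)" by simp
  also have "\<dots> \<le> (\<Sum>c'\<in>K. real (card (reps c' - F)))"
    using card_reps_unfailed K_level by (intro sum_mono) auto
  also have "\<dots> = real (card (\<Union>c'\<in>K. reps c' - F))"
  proof -
    have "disjoint_family_on (\<lambda>c'. reps c' - F) K"
      using reps_disjoint K_level unfolding disjoint_family_on_def by blast
    then have "card (\<Union>c'\<in>K. reps c' - F) = (\<Sum>c'\<in>K. card (reps c' - F))"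
      using fin_K finite_reps K_level by (intro card_UN_disjoint') auto
    then show ?thesis by simp
  qed
  also have "\<dots> \<le> real (card {u\<in>N2. layer2 u + 1 = layer2 v \<and> u \<in> ?P \<and> u \<in> H_fired B l})"
  proof (intro of_nat_mono card_mono)
    show "finite {u\<in>N2. layer2 u + 1 = layer2 v \<and> u \<in> ?P \<and> u \<in> H_fired B l}"
      using finite_N2 by simp
    show "(\<Union>c'\<in>K. reps c' - F) \<subseteq> {u\<in>N2. layer2 u + 1 = layer2 v \<and> u \<in> ?P \<and> u \<in> H_fired B l}"
      using v_layer K(1) K_fired K_level reps_N2 reps_layer by fastforce
  qed
  finally show "v \<in> H_fired B (Suc l)"
    using v c reps_N2 v_layer by (subst fired_Suc_iff_card_inputs[where w = "H_weight C level children reps", OF finite_N2 weight]) auto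
qed

lemma H_fires_unfailed_reps:
  assumes B: "B \<subseteq> {c\<in>C. level c = 0}"
  shows "c \<in> C \<Longrightarrow> rep c \<in> A1_fired B (level c) \<Longrightarrow> reps c - F \<subseteq> H_fired B (level c)"
proof (induction "level c" arbitrary: c)
  case 0
  then have "c \<in> B"
    using B rep_inj by (auto dest: inj_onD)
  then show ?case
    using "0" reps_N2 reps_layer by auto
next
  case (Suc l)
  let ?K = "{c'\<in>children c. rep c' \<in> A1_fired B l}"
  have "c' \<in> C" "level c' = l" if "c' \<in> ?K" for c'
    using children_level[OF Suc.prems(1)] Suc.hyps(2) that by auto
  with Suc.hyps(1) have "reps c' - F \<subseteq> H_fired B l" if "c' \<in> ?K" for c'
    using that by blast
  moreover have "tau \<le> real (card ?K)"
    using A1_fired_Suc_card_children[of c l B] Suc.hyps(2) Suc.prems by simp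
  ultimately show ?case
    using H_fired_Suc_if_children_fired[of c l ?K] Suc by simp
qed

end

theorem theorem7p1:
  fixes D C :: "'c set" and level :: "'c \<Rightarrow> nat" and children :: "'c \<Rightarrow> 'c set"
    and lmax n k m :: nat and r1 r2 \<epsilon> :: real
    and N1 :: "'n1 set" and layer1 :: "'n1 \<Rightarrow> nat" and rep :: "'c \<Rightarrow> 'n1"
    and N2 :: "'n2 set" and layer2 :: "'n2 \<Rightarrow> nat" and reps :: "'c \<Rightarrow> 'n2 set"
    and F :: "'n2 set"
  assumes hier: "concept_hierarchy D level lmax n k C children"
    and r1: "0 \<le> r1" "r1 \<le> 1" and r2: "0 \<le> r2" "r2 \<le> 1" and eps: "0 \<le> \<epsilon>" "\<epsilon> \<le> 1"
    and r1r2: "r1 \<le> r2 * (1 - \<epsilon>)"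
    and m: "0 < m"
    (* network A_1 *)
    and net1: "layered_network N1 layer1 lmax"
    and rep_inj: "inj_on rep (rep_domain D level C)"
    and rep_layer: "\<forall>c\<in>rep_domain D level C. rep c \<in> N1 \<and> layer1 (rep c) = level c"
    (* network H *)
    and net2: "layered_network N2 layer2 lmax"
    and reps_card: "\<forall>c\<in>rep_domain D level C. finite (reps c) \<and> card (reps c) = m"
    and reps_layer: "\<forall>c\<in>rep_domain D level C. reps c \<subseteq> N2 \<and> (\<forall>v\<in>reps c. layer2 v = level c)"
    and reps_disj: "\<forall>c\<in>rep_domain D level C. \<forall>c'\<in>rep_domain D level C. c \<noteq> c' \<longrightarrow> reps c \<inter> reps c' = {}"
    and F_ok: "\<forall>c\<in>rep_domain D level C. real (card (reps c - F)) \<ge> real m * (1 - \<epsilon>)"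
  shows "\<forall>B \<subseteq> {c\<in>C. level c = 0}. \<forall>c\<in>C.
           rep c \<in> fired N1 layer1 (A1_weight C level children rep) (r2 * real k) {} (rep ` B) (level c)
           \<longrightarrow> real (card {v\<in>reps c. v \<in> fired N2 layer2 (H_weight C level children reps)
                                         (r2 * real k * real m * (1 - \<epsilon>)) F (\<Union>b\<in>B. reps b) (level c)})
               \<ge> real m * (1 - \<epsilon>)"
proof (intro allI impI ballI)
  fix B c
  assume B: "B \<subseteq> {c\<in>C. level c = 0}" and c: "c \<in> C"
    and fired: "rep c \<in> fired N1 layer1 (A1_weight C level children rep) (r2 * real k) {} (rep ` B) (level c)"
  have C_dom: "C \<subseteq> rep_domain D level C"
    using hier unfolding concept_hierarchy_def rep_domain_def by auto
  interpret hierarchy_networks C level children N1 layer1 rep N2 layer2 reps F "r2 * real k" "real m * (1 - \<epsilon>)"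
  proof
    show "children c \<subseteq> {c'\<in>C. level c' = level c - 1}" "finite (children c)"
      if "c \<in> C" "1 \<le> level c" for c
      using hier that unfolding concept_hierarchy_def by blast+
    show "finite N1" "finite N2"
      using net1 net2 unfolding layered_network_def by blast+
    show "inj_on rep C"
      using rep_inj C_dom by (rule inj_on_subset)
    show "reps c \<subseteq> N2" "finite (reps c)" "real m * (1 - \<epsilon>) \<le> real (card (reps c - F))"
      if "c \<in> C" for c
      using reps_layer reps_card F_ok C_dom that by auto
    show "layer2 v = level c" if "c \<in> C" "v \<in> reps c" for c v
      using reps_layer C_dom that by blast
    show "disjoint_family_on reps C"
      using reps_disj C_dom unfolding disjoint_family_on_def by blast
    show "0 \<le> real m * (1 - \<epsilon>)"
      using eps by simp
  qed
  have sub: "reps c - F \<subseteq> {v\<in>reps c. v \<in> fired N2 layer2 (H_weight C level children reps)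
                                 (r2 * real k * real m * (1 - \<epsilon>)) F (\<Union>b\<in>B. reps b) (level c)}"
    using H_fires_unfailed_reps[OF B c fired] by (auto simp: mult.assoc)
  have "card (reps c - F) \<le> card {v\<in>reps c. v \<in> fired N2 layer2 (H_weight C level children reps)
                                 (r2 * real k * real m * (1 - \<epsilon>)) F (\<Union>b\<in>B. reps b) (level c)}"
    using finite_reps[OF c] by (intro card_mono[OF _ sub]) simp
  then show "real (card {v\<in>reps c. v \<in> fired N2 layer2 (H_weight C level children reps)
                                         (r2 * real k * real m * (1 - \<epsilon>)) F (\<Union>b\<in>B. reps b) (level c)})
               \<ge> real m * (1 - \<epsilon>)"
    using card_reps_unfailed[OF c] of_nat_mono order_trans by meson
qed

end
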